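(* Let $f\in C^1[0,1]$ with $f(0)=0$, $h:=f'$, and $q$ satisfying (q). For no $c<c^*$ does problem $(P_c)$ admit a solution.
   Context: Condition (q): $q\in C[0,1]$, $q>0$ on $(0,1)$, $q(0)=q(1)=0$, and $\limsup_{\varphi\to0^+}q(\varphi)/\varphi<+\infty$. For $c\in\mathbb R$, a solution of problem $(P_c)$ is a function $z\in C[0,1]\cap C^1(0,1)$ with $\dot z(\varphi)=h(\varphi)-c-q(\varphi)/z(\varphi)$ and $z(\varphi)<0$ for all $\varphi\in(0,1)$, and $z(0)=0$. A solution of $(P^{00}_c)$ is a solution of $(P_c)$ which also satisfies $z(1)=0$. $c^*$ denotes the real number such that $(P^{00}_c)$ has a solution iff $c\ge c^*$. *)

theory Defs
  imports "HOL-Analysis.Analysis"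
begin

definition cond_q :: "(real \<Rightarrow> real) \<Rightarrow> bool" where
  "cond_q q \<longleftrightarrow> continuous_on {0..1} q \<and> (\<forall>\<phi>\<in>{0<..<1}. q \<phi> > 0) \<and> q 0 = 0 \<and> q 1 = 0
     \<and> Limsup (at_right 0) (\<lambda>\<phi>. ereal (q \<phi> / \<phi>)) < \<infinity>"

definition C1_on :: "real set \<Rightarrow> (real \<Rightarrow> real) \<Rightarrow> bool" where
  "C1_on S z \<longleftrightarrow> (\<exists>z'. continuous_on S z' \<and> (\<forall>x\<in>S. (z has_real_derivative z' x) (at x)))"

definition sol_P :: "(real \<Rightarrow> real) \<Rightarrow> (real \<Rightarrow> real) \<Rightarrow> real \<Rightarrow> (real \<Rightarrow> real) \<Rightarrow> bool" where
  "sol_P h q c z \<longleftrightarrow> continuous_on {0..1} z \<and> C1_on {0<..<1} z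
     \<and> (\<forall>\<phi>\<in>{0<..<1}. (z has_real_derivative (h \<phi> - c - q \<phi> / z \<phi>)) (at \<phi>))
     \<and> (\<forall>\<phi>\<in>{0<..<1}. z \<phi> < 0) \<and> z 0 = 0"

definition sol_P00 :: "(real \<Rightarrow> real) \<Rightarrow> (real \<Rightarrow> real) \<Rightarrow> real \<Rightarrow> (real \<Rightarrow> real) \<Rightarrow> bool" where
  "sol_P00 h q c z \<longleftrightarrow> sol_P h q c z \<and> z 1 = 0"

end

theory Submission
  imports Defs
begin

text \<open>Substituting \<open>t = 1 - \<phi>\<close> turns \<open>(P\<^sub>c)\<close> into \<open>y' = (c - h(1-t)) + q(1-t)/y\<close>, to be solved
  with \<open>y \<rightarrow> 0\<close> at \<open>t = 0\<close>, where the right-hand side is singular. If \<open>z\<close> solves \<open>(P\<^sub>c)\<close> and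
  \<open>c < c'\<close>, then \<open>z(1-t)\<close> is a strict subsolution of the equation for \<open>c'\<close>. Solving the
  \<open>c'\<close>-equation from small negative data at \<open>t = 1/(n+4)\<close> gives solutions trapped between
  \<open>z(1-t)\<close> and \<open>0\<close>. Since the right-hand side decreases in \<open>y < 0\<close> they do not separate, and
  since \<open>q(1) = 0\<close> they stay close to \<open>0\<close> near \<open>t = 0\<close>; hence they form a Cauchy sequence. The
  limit is negative, tends to \<open>0\<close> at both ends and so solves \<open>(P\<^sup>0\<^sup>0\<^sub>c\<^sub>')\<close>. For
  \<open>c' = (c + c\<^sup>*)/2\<close> this contradicts the characterisation of \<open>c\<^sup>*\<close>.\<close>

section \<open>Derivatives, limits and barriers\<close>

lemma has_real_derivative_of_uniform_limit:
  fixes f f' :: "nat \<Rightarrow> real \<Rightarrow> real"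
  assumes "convex S"
    and der: "\<forall>\<^sub>F n in sequentially. \<forall>x\<in>S. (f n has_real_derivative f' n x) (at x within S)"
    and ul: "uniform_limit S f' g' sequentially"
    and lim: "\<And>x. x \<in> S \<Longrightarrow> (\<lambda>n. f n x) \<longlonglongrightarrow> F x"
    and "x \<in> S"
  shows "(F has_real_derivative g' x) (at x within S)"
proof -
  obtain N where N: "\<And>n y. N \<le> n \<Longrightarrow> y \<in> S \<Longrightarrow> (f n has_real_derivative f' n y) (at y within S)"
    using der unfolding eventually_sequentially by blast
  have "\<exists>G. \<forall>y\<in>S. (\<lambda>n. f (n + N) y) \<longlonglongrightarrow> G y \<and> (G has_derivative (*) (g' y)) (at y within S)"
  proof (rule has_derivative_sequence[where f'="\<lambda>n y. (*) (f' (n + N) y)",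
        OF assms(1) _ _ \<open>x \<in> S\<close>])
    show "(f (n + N) has_derivative (*) (f' (n + N) y)) (at y within S)" if "y \<in> S" for n y
      using N[OF _ that, of "n + N"] by (simp add: has_field_derivative_def)
    show "(\<lambda>n. f (n + N) x) \<longlonglongrightarrow> F x"
      using LIMSEQ_ignore_initial_segment[OF lim[OF \<open>x \<in> S\<close>]] .
    fix e :: real assume "e > 0"
    have "uniform_limit S (\<lambda>n. f' (n + N)) g' sequentially"
      using filterlim_compose[OF ul filterlim_add_const_nat_at_top] .
    with \<open>e > 0\<close> have "\<forall>\<^sub>F n in sequentially. \<forall>y\<in>S. dist (f' (n + N) y) (g' y) < e"
      by (simp add: uniform_limit_iff)
    then show "\<forall>\<^sub>F n in sequentially. \<forall>y\<in>S. \<forall>h. norm (f' (n + N) y * h - g' y * h) \<le> e * norm h"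
      by eventually_elim
        (auto simp: dist_real_def abs_mult left_diff_distrib[symmetric] intro!: mult_right_mono)
  qed
  then obtain G where G: "\<And>y. y \<in> S \<Longrightarrow> (\<lambda>n. f (n + N) y) \<longlonglongrightarrow> G y"
    and G': "(G has_derivative (*) (g' x)) (at x within S)"
    using \<open>x \<in> S\<close> by blast
  have "F y = G y" if "y \<in> S" for y
    using LIMSEQ_unique[OF LIMSEQ_ignore_initial_segment[OF lim[OF that]] G[OF that]] .
  with G' show ?thesis
    unfolding has_field_derivative_def by (rule has_derivative_transform[OF \<open>x \<in> S\<close>, rotated])
qed

lemma abs_le_if_derivative_bounded:
  fixes f B f' B' :: "real \<Rightarrow> real"
  assumes "a \<le> t" "continuous_on {a..t} f" "continuous_on {a..t} B"
    and "\<And>x. a < x \<Longrightarrow> x < t \<Longrightarrow> (f has_real_derivative f' x) (at x)"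
    and "\<And>x. a < x \<Longrightarrow> x < t \<Longrightarrow> (B has_real_derivative B' x) (at x)"
    and "\<And>x. a < x \<Longrightarrow> x < t \<Longrightarrow> \<bar>f' x\<bar> \<le> B' x"
    and "f a = 0" "B a = 0"
  shows "\<bar>f t\<bar> \<le> B t"
proof -
  have "0 \<le> B' x - f' x" "0 \<le> B' x + f' x" if "a < x" "x < t" for x
    using assms(6)[OF that] by auto
  then have "B a - f a \<le> B t - f t"
    using assms(1-5)
    by (intro DERIV_nonneg_imp_increasing_open[of a t "\<lambda>x. B x - f x"])
      (auto intro!: continuous_intros derivative_eq_intros exI)
  moreover have "B a + f a \<le> B t + f t"
    using \<open>\<And>x. a < x \<Longrightarrow> x < t \<Longrightarrow> 0 \<le> B' x + f' x\<close> assms(1-5)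
    by (intro DERIV_nonneg_imp_increasing_open[of a t "\<lambda>x. B x + f x"])
      (auto intro!: continuous_intros derivative_eq_intros exI)
  ultimately show ?thesis using assms(7,8) by linarith
qed

lemma nonneg_if_derivative_pos_at_zeros:
  fixes g :: "real \<Rightarrow> real"
  assumes "a \<le> b" "continuous_on {a..b} g" "g a > 0"
    and "\<And>x. a < x \<Longrightarrow> x < b \<Longrightarrow> g x = 0 \<Longrightarrow> \<exists>d>0. (g has_real_derivative d) (at x)"
  shows "\<forall>x\<in>{a..b}. g x \<ge> 0"
proof (rule ccontr)
  assume "\<not> ?thesis"
  then obtain x1 where x1: "x1 \<in> {a..b}" "g x1 < 0" by force
  define S where "S = {a..x1} \<inter> g -` {..0}"
  have "closed S" unfolding S_def
    by (rule continuous_closed_preimage) (use assms(2) x1 in \<open>auto intro: continuous_on_subset\<close>)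
  moreover have "x1 \<in> S" "bdd_below S" using x1 unfolding S_def by (auto intro: bdd_belowI[of _ a])
  ultimately have t1S: "Inf S \<in> S" and t1le: "\<And>x. x \<in> S \<Longrightarrow> Inf S \<le> x"
    using closed_contains_Inf cInf_lower by blast+
  define t1 where "t1 = Inf S"
  have "a \<le> t1" "t1 \<le> x1" "g t1 \<le> 0" using t1S unfolding S_def t1_def by auto
  with assms(3) have "a < t1" by (cases "t1 = a") auto
  have pos: "g x > 0" if "a \<le> x" "x < t1" for x
    using t1le[of x] that t1S unfolding S_def t1_def by force
  have "g t1 = 0"
  proof -
    have "continuous_on {a..t1} g"
      by (rule continuous_on_subset[OF assms(2)]) (use x1 \<open>t1 \<le> x1\<close> in auto)
    then obtain x where "a \<le> x" "x \<le> t1" "g x = 0"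
      using IVT2'[of g t1 0 a] assms(3) \<open>a < t1\<close> \<open>g t1 \<le> 0\<close> by auto
    with pos[of x] show ?thesis by force
  qed
  moreover have "t1 < b" using x1 \<open>t1 \<le> x1\<close> \<open>g t1 = 0\<close> by (cases "t1 = x1") auto
  ultimately obtain d where d: "d > 0" "(g has_real_derivative d) (at t1)"
    using assms(4) \<open>a < t1\<close> by blast
  then obtain e where e: "e > 0" "\<And>h. h > 0 \<Longrightarrow> h < e \<Longrightarrow> g (t1 - h) < g t1"
    using DERIV_pos_inc_left by blast
  define h where "h = min (e/2) ((t1 - a)/2)"
  have "h > 0" "h < e" "a \<le> t1 - h" using e(1) \<open>a < t1\<close> unfolding h_def by (auto simp: min_def field_simps)
  with e(2)[of h] pos[of "t1 - h"] \<open>g t1 = 0\<close> show False by auto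
qed

section \<open>Picard iteration\<close>

lemma has_real_derivative_power_over_fact:
  "((\<lambda>t::real. (t - a) ^ Suc k / fact (Suc k)) has_real_derivative (x - a) ^ k / fact k) (at x)"
proof -
  have "((\<lambda>t::real. (t - a) ^ Suc k / fact (Suc k)) has_real_derivative
      real (Suc k) * (x - a) ^ k / fact (Suc k)) (at x)"
    using DERIV_power[OF DERIV_diff[OF DERIV_ident DERIV_const[of a]], of "Suc k" x]
    by (intro DERIV_cdivide) simp
  also have "real (Suc k) * (x - a) ^ k / fact (Suc k) = (x - a) ^ k / fact k"
    by (simp add: fact_Suc del: of_nat_Suc)
  finally show ?thesis .
qed

lemma abs_le_power_over_fact_if_derivative_bounded:
  fixes f f' :: "real \<Rightarrow> real"
  assumes "a \<le> t" "continuous_on {a..t} f" "f a = 0"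
    and "\<And>x. a < x \<Longrightarrow> x < t \<Longrightarrow> (f has_real_derivative f' x) (at x)"
    and "\<And>x. a < x \<Longrightarrow> x < t \<Longrightarrow> \<bar>f' x\<bar> \<le> K * ((x - a) ^ k / fact k)"
  shows "\<bar>f t\<bar> \<le> K * ((t - a) ^ Suc k / fact (Suc k))"
proof (rule abs_le_if_derivative_bounded[where f=f and f'=f'
      and B="\<lambda>x. K * ((x - a) ^ Suc k / fact (Suc k))" and B'="\<lambda>x. K * ((x - a) ^ k / fact k)"])
  show "((\<lambda>x. K * ((x - a) ^ Suc k / fact (Suc k))) has_real_derivative K * ((x - a) ^ k / fact k)) (at x)"
    for x by (rule DERIV_cmult[OF has_real_derivative_power_over_fact])
qed (use assms in \<open>auto intro!: continuous_intros simp del: fact_Suc\<close>)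

locale lipschitz_ode =
  fixes g :: "real \<Rightarrow> real \<Rightarrow> real" and a b L :: real
  assumes a_le_b: "a \<le> b"
    and g_cont: "continuous_on ({a..b} \<times> UNIV) (\<lambda>p. g (fst p) (snd p))"
    and L_nonneg: "0 \<le> L"
    and lipschitz: "\<And>t y1 y2. t \<in> {a..b} \<Longrightarrow> \<bar>g t y1 - g t y2\<bar> \<le> L * \<bar>y1 - y2\<bar>"
begin

lemma continuous_on_g_along:
  assumes "continuous_on {a..b} y"
  shows "continuous_on {a..b} (\<lambda>t. g t (y t))"
proof -
  have "continuous_on {a..b} (\<lambda>t. (t, y t))" by (intro continuous_intros assms)
  from continuous_on_compose2[OF g_cont this] show ?thesis by auto
qed

primrec picard_iterate :: "real \<Rightarrow> nat \<Rightarrow> real \<Rightarrow> real" where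
  "picard_iterate y0 0 = (\<lambda>t. y0)"
| "picard_iterate y0 (Suc n) = (\<lambda>t. y0 + integral {a..t} (\<lambda>s. g s (picard_iterate y0 n s)))"

lemma picard_iterate_continuous: "continuous_on {a..b} (picard_iterate y0 n)"
  and picard_iterate_derivative:
    "t \<in> {a..b} \<Longrightarrow> (picard_iterate y0 (Suc n) has_real_derivative g t (picard_iterate y0 n t))
      (at t within {a..b})"
proof -
  have der: "(picard_iterate y0 (Suc n) has_real_derivative g t (picard_iterate y0 n t))
      (at t within {a..b})" if "continuous_on {a..b} (picard_iterate y0 n)" "t \<in> {a..b}" for n t
    using integral_has_real_derivative[OF continuous_on_g_along[OF that(1)] that(2)]
    by (auto intro!: derivative_eq_intros)
  show cont: "continuous_on {a..b} (picard_iterate y0 n)" for n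
  proof (induction n)
    case (Suc n)
    with der show ?case
      using DERIV_continuous continuous_on_eq_continuous_within by blast
  qed simp
  show "t \<in> {a..b} \<Longrightarrow> (picard_iterate y0 (Suc n) has_real_derivative g t (picard_iterate y0 n t))
      (at t within {a..b})"
    by (rule der[OF cont])
qed

lemma picard_iterate_at_start: "picard_iterate y0 n a = y0"
  by (cases n) (simp_all add: integral_null)

lemma picard_iterate_step_bound:
  "\<exists>M\<ge>0. \<forall>n. \<forall>t\<in>{a..b}.
     \<bar>picard_iterate y0 (Suc n) t - picard_iterate y0 n t\<bar> \<le> M * L ^ n * ((t - a) ^ Suc n / fact (Suc n))"
proof -
  let ?Y = "picard_iterate y0"
  obtain M where M: "\<And>t. t \<in> {a..b} \<Longrightarrow> \<bar>g t y0\<bar> \<le> M" "0 \<le> M"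
    using compact_imp_bounded[OF compact_continuous_image[OF continuous_on_g_along[of "\<lambda>t. y0"] compact_Icc]]
    unfolding bounded_pos by (fastforce intro: less_imp_le)
  have der: "(?Y (Suc n) has_real_derivative g x (?Y n x)) (at x)" if "a < x" "x < b" for n x
    using picard_iterate_derivative[of x y0 n] that at_within_Icc_at[of a x b] by auto
  have "\<bar>?Y (Suc n) t - ?Y n t\<bar> \<le> M * L ^ n * ((t - a) ^ Suc n / fact (Suc n))"
    if "t \<in> {a..b}" for n t
    using that
  proof (induction n arbitrary: t)
    case 0
    show ?case
    proof (rule abs_le_power_over_fact_if_derivative_bounded[where f'="\<lambda>x. g x y0"])
      show "continuous_on {a..t} (\<lambda>t. ?Y (Suc 0) t - ?Y 0 t)"
        using 0 by (intro continuous_intros continuous_on_subset[OF picard_iterate_continuous]) auto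
      show "((\<lambda>t. ?Y (Suc 0) t - ?Y 0 t) has_real_derivative g x y0) (at x)" if "a < x" "x < t" for x
        using DERIV_diff[OF der[of x 0] DERIV_const[of y0 "at x"]] that 0 by simp
    qed (use 0 M(1) in \<open>auto simp: picard_iterate_at_start\<close>)
  next
    case (Suc n)
    show ?case
    proof (rule abs_le_power_over_fact_if_derivative_bounded[
          where f'="\<lambda>x. g x (?Y (Suc n) x) - g x (?Y n x)"])
      show "continuous_on {a..t} (\<lambda>t. ?Y (Suc (Suc n)) t - ?Y (Suc n) t)"
        using Suc.prems by (intro continuous_intros continuous_on_subset[OF picard_iterate_continuous]) auto
      show "((\<lambda>t. ?Y (Suc (Suc n)) t - ?Y (Suc n) t) has_real_derivative
          g x (?Y (Suc n) x) - g x (?Y n x)) (at x)" if "a < x" "x < t" for x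
        using that Suc.prems by (intro DERIV_diff der) auto
      show "\<bar>g x (?Y (Suc n) x) - g x (?Y n x)\<bar> \<le> M * L ^ Suc n * ((x - a) ^ Suc n / fact (Suc n))"
        if "a < x" "x < t" for x
      proof -
        have "\<bar>g x (?Y (Suc n) x) - g x (?Y n x)\<bar> \<le> L * \<bar>?Y (Suc n) x - ?Y n x\<bar>"
          using lipschitz that Suc.prems by auto
        also have "\<dots> \<le> L * (M * L ^ n * ((x - a) ^ Suc n / fact (Suc n)))"
          using Suc.IH[of x] that Suc.prems L_nonneg by (intro mult_left_mono) auto
        finally show ?thesis by (simp add: algebra_simps)
      qed
    qed (use Suc.prems in \<open>auto simp: picard_iterate_at_start\<close>)
  qed
  with M(2) show ?thesis by blast
qed

lemma picard_iterate_uniformly_convergent: "uniformly_convergent_on {a..b} (picard_iterate y0)"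
proof -
  let ?Y = "picard_iterate y0"
  obtain M where "0 \<le> M" and M: "\<And>n t. t \<in> {a..b} \<Longrightarrow>
      \<bar>?Y (Suc n) t - ?Y n t\<bar> \<le> M * L ^ n * ((t - a) ^ Suc n / fact (Suc n))"
    using picard_iterate_step_bound by blast
  define B where "B n = M * (b - a) * (inverse (fact n) * (L * (b - a)) ^ n)" for n
  have "norm (?Y (Suc n) t - ?Y n t) \<le> B n" if "t \<in> {a..b}" for n t
  proof -
    have "(t - a) ^ Suc n \<le> (b - a) ^ Suc n" using that by (intro power_mono) auto
    then have "M * L ^ n * ((t - a) ^ Suc n / fact (Suc n)) \<le> M * L ^ n * ((b - a) ^ Suc n / fact n)"
      using \<open>0 \<le> M\<close> L_nonneg a_le_b
      by (intro mult_left_mono frac_le fact_mono) auto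
    also have "\<dots> = B n" unfolding B_def by (simp add: power_mult_distrib divide_inverse)
    finally show ?thesis using M[OF that, of n] by simp
  qed
  moreover have "summable B" unfolding B_def by (intro summable_mult summable_exp)
  ultimately have "uniform_limit {a..b} (\<lambda>n t. \<Sum>i<n. ?Y (Suc i) t - ?Y i t)
      (\<lambda>t. \<Sum>i. ?Y (Suc i) t - ?Y i t) sequentially"
    by (rule Weierstrass_m_test)
  then have "uniform_limit {a..b} (\<lambda>n t. y0 + (\<Sum>i<n. ?Y (Suc i) t - ?Y i t))
      (\<lambda>t. y0 + (\<Sum>i. ?Y (Suc i) t - ?Y i t)) sequentially"
    by (intro uniform_limit_intros)
  moreover have "y0 + (\<Sum>i<n. ?Y (Suc i) t - ?Y i t) = ?Y n t" for n t
    using sum_lessThan_telescope[of "\<lambda>i. ?Y i t" n] by simp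
  ultimately show ?thesis unfolding uniformly_convergent_on_def by auto
qed

lemma uniform_limit_g_along:
  assumes "uniform_limit {a..b} f y F"
  shows "uniform_limit {a..b} (\<lambda>n t. g t (f n t)) (\<lambda>t. g t (y t)) F"
  unfolding uniform_limit_iff
proof (intro allI impI)
  fix e :: real assume "e > 0"
  then have "e / (L + 1) > 0" using L_nonneg by simp
  then have "\<forall>\<^sub>F n in F. \<forall>t\<in>{a..b}. dist (f n t) (y t) < e / (L + 1)"
    using assms unfolding uniform_limit_iff by blast
  then show "\<forall>\<^sub>F n in F. \<forall>t\<in>{a..b}. dist (g t (f n t)) (g t (y t)) < e"
  proof eventually_elim
    case (elim n)
    show ?case
    proof
      fix t assume t: "t \<in> {a..b}"
      have "dist (g t (f n t)) (g t (y t)) \<le> L * dist (f n t) (y t)"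
        using lipschitz[OF t] by (simp add: dist_real_def)
      also have "\<dots> \<le> L * (e / (L + 1))"
        using elim t L_nonneg by (intro mult_left_mono) (auto simp: less_imp_le)
      also have "\<dots> < e" using \<open>e > 0\<close> L_nonneg by (simp add: field_simps)
      finally show "dist (g t (f n t)) (g t (y t)) < e" .
    qed
  qed
qed

theorem lipschitz_ode_solution_exists:
  "\<exists>y. y a = y0 \<and> (\<forall>t\<in>{a..b}. (y has_real_derivative g t (y t)) (at t within {a..b}))"
proof -
  let ?Y = "picard_iterate y0"
  obtain y where y: "uniform_limit {a..b} ?Y y sequentially"
    using picard_iterate_uniformly_convergent unfolding uniformly_convergent_on_def by blast
  have lim: "(\<lambda>n. ?Y n t) \<longlonglongrightarrow> y t" if "t \<in> {a..b}" for t
    by (rule tendsto_uniform_limitI[OF y that])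
  have "(y has_real_derivative g t (y t)) (at t within {a..b})" if "t \<in> {a..b}" for t
  proof (rule has_real_derivative_of_uniform_limit[where f="\<lambda>n. ?Y (Suc n)",
        OF _ _ uniform_limit_g_along[OF y] _ that])
    show "\<forall>\<^sub>F n in sequentially. \<forall>x\<in>{a..b}.
        (?Y (Suc n) has_real_derivative g x (?Y n x)) (at x within {a..b})"
      using picard_iterate_derivative by (intro always_eventually) blast
    show "(\<lambda>n. ?Y (Suc n) x) \<longlonglongrightarrow> y x" if "x \<in> {a..b}" for x
      using LIMSEQ_Suc[OF lim[OF that]] .
  qed simp
  moreover have "y a = y0"
    using lim[of a] a_le_b by (simp add: picard_iterate_at_start LIMSEQ_const_iff)
  ultimately show ?thesis by blast
qed

end

section \<open>The equation \<open>y' = H t + Q t / y\<close>\<close>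

definition ode_solution_on :: "(real \<Rightarrow> real) \<Rightarrow> (real \<Rightarrow> real) \<Rightarrow> real \<Rightarrow> real \<Rightarrow> (real \<Rightarrow> real) \<Rightarrow> bool"
  where "ode_solution_on H Q \<alpha> \<beta> y \<longleftrightarrow> continuous_on {\<alpha>..\<beta>} y
    \<and> (\<forall>t\<in>{\<alpha><..<\<beta>}. (y has_real_derivative H t + Q t / y t) (at t))"

lemma ode_solution_on_subinterval:
  "ode_solution_on H Q \<alpha> \<beta> y \<Longrightarrow> \<alpha> \<le> \<alpha>' \<Longrightarrow> \<beta>' \<le> \<beta> \<Longrightarrow> ode_solution_on H Q \<alpha>' \<beta>' y"
  unfolding ode_solution_on_def by (auto elim: continuous_on_subset)

lemma abs_divide_diff_le:
  fixes y1 y2 w q Qm :: real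
  assumes "y1 \<le> -w" "y2 \<le> -w" "w > 0" "0 \<le> q" "q \<le> Qm"
  shows "\<bar>q / y1 - q / y2\<bar> \<le> Qm * \<bar>y1 - y2\<bar> / w\<^sup>2"
proof -
  have "w * w \<le> (- y1) * (- y2)" using assms by (intro mult_mono) auto
  then have prod: "w\<^sup>2 \<le> y1 * y2" by (simp add: power2_eq_square)
  have "y1 < 0" "y2 < 0" using assms by auto
  then have "q / y1 - q / y2 = q * (y2 - y1) / (y1 * y2)" by (simp add: field_simps)
  with \<open>y1 < 0\<close> \<open>y2 < 0\<close> \<open>0 \<le> q\<close> have "\<bar>q / y1 - q / y2\<bar> = q * \<bar>y1 - y2\<bar> / (y1 * y2)"
    by (simp add: abs_mult abs_divide abs_minus_commute mult_neg_neg)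
  also have "\<dots> \<le> Qm * \<bar>y1 - y2\<bar> / w\<^sup>2"
    using assms prod by (intro frac_le mult_mono) auto
  finally show ?thesis .
qed

lemma uniform_limit_ode_rhs:
  fixes f :: "'b \<Rightarrow> 'a \<Rightarrow> real" and y H Q :: "'a \<Rightarrow> real"
  assumes "uniform_limit S f y F"
    and "\<forall>\<^sub>F n in F. \<forall>x\<in>S. f n x \<le> -w" "\<And>x. x \<in> S \<Longrightarrow> y x \<le> -w" "0 < w"
    and Q: "\<And>x. x \<in> S \<Longrightarrow> 0 \<le> Q x \<and> Q x \<le> Qm" and "0 \<le> Qm"
  shows "uniform_limit S (\<lambda>n x. H x + Q x / f n x) (\<lambda>x. H x + Q x / y x) F"
  unfolding uniform_limit_iff
proof (intro allI impI)
  fix e :: real assume "0 < e"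
  then have "0 < e * w\<^sup>2 / (Qm + 1)" using \<open>0 < w\<close> \<open>0 \<le> Qm\<close> by auto
  then have "\<forall>\<^sub>F n in F. \<forall>x\<in>S. dist (f n x) (y x) < e * w\<^sup>2 / (Qm + 1)"
    using assms(1) unfolding uniform_limit_iff by blast
  with assms(2) show "\<forall>\<^sub>F n in F. \<forall>x\<in>S. dist (H x + Q x / f n x) (H x + Q x / y x) < e"
  proof eventually_elim
    case (elim n)
    show ?case
    proof
      fix x assume x: "x \<in> S"
      have "\<bar>Q x / f n x - Q x / y x\<bar> \<le> Qm * \<bar>f n x - y x\<bar> / w\<^sup>2"
        using elim x assms(3,4) Q[OF x] by (intro abs_divide_diff_le) auto
      also have "\<dots> \<le> (Qm + 1) * \<bar>f n x - y x\<bar> / w\<^sup>2"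
        by (intro divide_right_mono mult_right_mono) auto
      also have "\<dots> < (Qm + 1) * (e * w\<^sup>2 / (Qm + 1)) / w\<^sup>2"
        using elim x \<open>0 < w\<close> \<open>0 \<le> Qm\<close>
        by (intro divide_strict_right_mono mult_strict_left_mono) (auto simp: dist_real_def)
      also have "\<dots> = e" using \<open>0 < w\<close> \<open>0 \<le> Qm\<close> by simp
      finally show "dist (H x + Q x / f n x) (H x + Q x / y x) < e" by (simp add: dist_real_def)
    qed
  qed
qed

lemma lipschitz_ode_truncated:
  assumes "a \<le> b" "continuous_on {a..b} H" "continuous_on {a..b} Q"
    and Q: "\<And>t. t \<in> {a..b} \<Longrightarrow> 0 \<le> Q t \<and> Q t \<le> Qm" and "0 < \<eta>"
  shows "lipschitz_ode (\<lambda>t y. H t + Q t / min y (-\<eta>)) a b (Qm / \<eta>\<^sup>2)"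
proof
  show "continuous_on ({a..b} \<times> UNIV) (\<lambda>p. H (fst p) + Q (fst p) / min (snd p) (-\<eta>))"
    using \<open>0 < \<eta>\<close>
    by (intro continuous_intros continuous_on_compose2[OF assms(2)] continuous_on_compose2[OF assms(3)])
      (auto simp: min_def)
  show "0 \<le> Qm / \<eta>\<^sup>2" using Q[of a] \<open>a \<le> b\<close> by auto
  fix t y1 y2 assume t: "t \<in> {a..b}"
  have "\<bar>Q t / min y1 (-\<eta>) - Q t / min y2 (-\<eta>)\<bar> \<le> Qm * \<bar>min y1 (-\<eta>) - min y2 (-\<eta>)\<bar> / \<eta>\<^sup>2"
    using Q[OF t] \<open>0 < \<eta>\<close> by (simp add: abs_divide_diff_le)
  also have "\<dots> \<le> Qm / \<eta>\<^sup>2 * \<bar>y1 - y2\<bar>"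
    using Q[OF t] by (simp add: divide_right_mono mult_left_mono abs_le_iff min_def)
  finally show "\<bar>H t + Q t / min y1 (-\<eta>) - (H t + Q t / min y2 (-\<eta>))\<bar> \<le> Qm / \<eta>\<^sup>2 * \<bar>y1 - y2\<bar>"
    by simp
qed (fact \<open>a \<le> b\<close>)

text \<open>The truncation in \<open>lipschitz_ode_truncated\<close> is never active, because \<open>Q/\<eta>\<close> dominates \<open>H\<close>
  at the level \<open>-\<eta>\<close>.\<close>
lemma ode_solution_exists_below:
  assumes "a \<le> b" "continuous_on {a..b} H" "continuous_on {a..b} Q"
    and bounds: "\<And>t. t \<in> {a..b} \<Longrightarrow> \<bar>H t\<bar> \<le> C \<and> m \<le> Q t"
    and "0 < \<eta>" "\<eta> * (C + 1) \<le> m" "y0 < -\<eta>"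
  shows "\<exists>y. y a = y0 \<and> ode_solution_on H Q a b y \<and> (\<forall>t\<in>{a..b}. y t \<le> -\<eta>)"
proof -
  have "C \<ge> 0" using bounds[of a] \<open>a \<le> b\<close> by auto
  then have "m > 0" using \<open>0 < \<eta>\<close> \<open>\<eta> * (C + 1) \<le> m\<close> by (smt (verit) mult_pos_pos)
  obtain Qm where Qm: "\<And>t. t \<in> {a..b} \<Longrightarrow> Q t \<le> Qm"
    using compact_attains_sup[OF compact_continuous_image[OF assms(3) compact_Icc]] \<open>a \<le> b\<close> by force
  interpret lipschitz_ode "\<lambda>t y. H t + Q t / min y (-\<eta>)" a b "Qm / \<eta>\<^sup>2"
  proof (intro lipschitz_ode_truncated assms(1-3,5))
    show "0 \<le> Q t \<and> Q t \<le> Qm" if "t \<in> {a..b}" for t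
      using bounds[OF that] Qm[OF that] \<open>m > 0\<close> by auto
  qed
  obtain y where y0: "y a = y0"
    and y: "\<And>t. t \<in> {a..b} \<Longrightarrow> (y has_real_derivative H t + Q t / min (y t) (-\<eta>)) (at t within {a..b})"
    using lipschitz_ode_solution_exists by blast
  have cont: "continuous_on {a..b} y"
    using y DERIV_continuous continuous_on_eq_continuous_within by blast
  have y_at: "(y has_real_derivative H t + Q t / min (y t) (-\<eta>)) (at t)" if "a < t" "t < b" for t
    using y[of t] that at_within_Icc_at[of a t b] by auto
  have below: "\<forall>t\<in>{a..b}. -\<eta> - y t \<ge> 0"
  proof (rule nonneg_if_derivative_pos_at_zeros)
    show "continuous_on {a..b} (\<lambda>t. -\<eta> - y t)" by (intro continuous_intros cont)
    fix t assume t: "a < t" "t < b" "-\<eta> - y t = 0"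
    then have "y t = -\<eta>" by simp
    have "1 \<le> C + 1 - H t" using bounds[of t] t by auto
    also have "\<dots> \<le> Q t / \<eta> - H t"
      using bounds[of t] t \<open>0 < \<eta>\<close> \<open>\<eta> * (C + 1) \<le> m\<close> by (simp add: field_simps)
    also have "\<dots> = - (H t + Q t / min (y t) (-\<eta>))" using \<open>y t = -\<eta>\<close> by simp
    finally show "\<exists>d>0. ((\<lambda>t. -\<eta> - y t) has_real_derivative d) (at t)"
      using y_at[OF t(1,2)] by (intro exI[of _ "- (H t + Q t / min (y t) (-\<eta>))"])
        (auto intro!: derivative_eq_intros)
  qed (use \<open>a \<le> b\<close> y0 \<open>y0 < -\<eta>\<close> in auto)
  then have "min (y t) (-\<eta>) = y t" if "t \<in> {a..b}" for t
    using that by (simp add: min_def)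
  with y0 below cont y_at show ?thesis
    unfolding ode_solution_on_def by (intro exI[of _ y]) auto
qed

lemma ode_solution_above_subsolution:
  assumes "ode_solution_on H Q \<alpha> \<beta> y" "\<alpha> \<le> \<beta>" "continuous_on {\<alpha>..\<beta>} Z" "Z \<alpha> < y \<alpha>"
    and sub: "\<And>t. t \<in> {\<alpha><..<\<beta>} \<Longrightarrow> \<exists>d. (Z has_real_derivative d) (at t) \<and> d < H t + Q t / Z t"
  shows "\<forall>t\<in>{\<alpha>..\<beta>}. Z t \<le> y t"
proof -
  have "\<forall>t\<in>{\<alpha>..\<beta>}. y t - Z t \<ge> 0"
  proof (rule nonneg_if_derivative_pos_at_zeros)
    show "continuous_on {\<alpha>..\<beta>} (\<lambda>t. y t - Z t)"
      using assms(1,3) unfolding ode_solution_on_def by (intro continuous_intros) auto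
    fix t assume t: "\<alpha> < t" "t < \<beta>" "y t - Z t = 0"
    obtain d where "(Z has_real_derivative d) (at t)" "d < H t + Q t / Z t" using sub t by auto
    moreover have "(y has_real_derivative H t + Q t / y t) (at t)"
      using assms(1) t(1,2) unfolding ode_solution_on_def by auto
    ultimately show "\<exists>d>0. ((\<lambda>t. y t - Z t) has_real_derivative d) (at t)"
      using t(3) by (intro exI[of _ "H t + Q t / y t - d"]) (auto intro: DERIV_diff)
  qed (use assms in auto)
  then show ?thesis by auto
qed

text \<open>For negative solutions and \<open>Q \<ge> 0\<close> the right-hand side is decreasing in \<open>y\<close>, so
  \<open>(y\<^sub>1 - y\<^sub>2)\<^sup>2\<close> is nonincreasing.\<close>
lemma ode_solutions_nonexpansive:
  assumes "ode_solution_on H Q \<alpha> \<beta> y1" "ode_solution_on H Q \<alpha> \<beta> y2" "\<alpha> \<le> t" "t \<le> \<beta>"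
    and neg: "\<And>s. s \<in> {\<alpha><..<\<beta>} \<Longrightarrow> y1 s < 0 \<and> y2 s < 0 \<and> 0 \<le> Q s"
  shows "\<bar>y1 t - y2 t\<bar> \<le> \<bar>y1 \<alpha> - y2 \<alpha>\<bar>"
proof -
  have "(y1 t - y2 t)\<^sup>2 \<le> (y1 \<alpha> - y2 \<alpha>)\<^sup>2"
  proof (rule DERIV_nonpos_imp_decreasing_open[where f="\<lambda>s. (y1 s - y2 s)\<^sup>2", OF \<open>\<alpha> \<le> t\<close>])
    show "continuous_on {\<alpha>..t} (\<lambda>s. (y1 s - y2 s)\<^sup>2)"
      using assms(1,2,4) unfolding ode_solution_on_def
      by (intro continuous_intros) (auto elim: continuous_on_subset)
    fix s assume s: "\<alpha> < s" "s < t"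
    then have "s \<in> {\<alpha><..<\<beta>}" using assms(4) by auto
    define D where "D = (y1 s - y2 s) * (Q s / y1 s - Q s / y2 s)"
    have "((\<lambda>s. (y1 s - y2 s)\<^sup>2) has_real_derivative 2 * D) (at s)"
      using assms(1,2) \<open>s \<in> _\<close> unfolding ode_solution_on_def D_def
      by (auto intro!: derivative_eq_intros)
    moreover have "D = - (Q s * (y1 s - y2 s)\<^sup>2 / (y1 s * y2 s))"
      using neg[OF \<open>s \<in> _\<close>] unfolding D_def by (simp add: field_simps power2_eq_square)
    moreover have "0 \<le> Q s * (y1 s - y2 s)\<^sup>2 / (y1 s * y2 s)"
      using neg[OF \<open>s \<in> _\<close>] by (intro divide_nonneg_pos mult_nonneg_nonneg mult_neg_neg) auto
    ultimately show "\<exists>d. ((\<lambda>s. (y1 s - y2 s)\<^sup>2) has_real_derivative d) (at s) \<and> d \<le> 0"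
      by (intro exI[of _ "2 * D"]) auto
  qed
  then show ?thesis by (simp add: abs_le_square_iff)
qed

text \<open>Where \<open>Q \<le> \<eta>\<^sup>2\<close>, a solution below \<open>-\<eta>\<close> has slope at least \<open>-C - \<eta>\<close>, so it cannot cross a
  line of steeper descent from above.\<close>
lemma ode_solution_above_line:
  assumes "ode_solution_on H Q \<alpha> \<beta> y" "\<alpha> \<le> \<beta>"
    and bounds: "\<And>t. t \<in> {\<alpha><..<\<beta>} \<Longrightarrow> \<bar>H t\<bar> \<le> C \<and> 0 \<le> Q t \<and> Q t \<le> \<eta>\<^sup>2"
    and "0 < \<eta>" "\<eta> \<le> e" "0 \<le> C" "C + \<eta> < K" "-e < y \<alpha>"
  shows "\<forall>t\<in>{\<alpha>..\<beta>}. -(e + K * (t - \<alpha>)) \<le> y t"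
proof -
  have "\<forall>t\<in>{\<alpha>..\<beta>}. y t + (e + K * (t - \<alpha>)) \<ge> 0"
  proof (rule nonneg_if_derivative_pos_at_zeros)
    show "continuous_on {\<alpha>..\<beta>} (\<lambda>t. y t + (e + K * (t - \<alpha>)))"
      using assms(1) unfolding ode_solution_on_def by (intro continuous_intros) auto
    fix t assume t: "\<alpha> < t" "t < \<beta>" "y t + (e + K * (t - \<alpha>)) = 0"
    define B where "B = e + K * (t - \<alpha>)"
    have "0 \<le> K * (t - \<alpha>)" using t assms(4,6,7) by simp
    then have "\<eta> \<le> B" using assms(5) unfolding B_def by linarith
    have "y t = -B" using t(3) unfolding B_def by linarith
    then have "Q t / B \<le> \<eta>\<^sup>2 / \<eta>"
      using bounds[of t] t \<open>0 < \<eta>\<close> \<open>\<eta> \<le> B\<close> by (intro frac_le) auto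
    then have "-C - \<eta> \<le> H t + Q t / y t"
      using bounds[of t] t \<open>y t = -B\<close> by (simp add: power2_eq_square abs_le_iff)
    moreover have "(y has_real_derivative H t + Q t / y t) (at t)"
      using assms(1) t(1,2) unfolding ode_solution_on_def by auto
    ultimately show "\<exists>d>0. ((\<lambda>t. y t + (e + K * (t - \<alpha>))) has_real_derivative d) (at t)"
      using assms(7) by (intro exI[of _ "H t + Q t / y t + K"]) (auto intro!: derivative_eq_intros)
  qed (use assms in auto)
  then show ?thesis by auto
qed

lemma ode_solution_stays_below:
  assumes "ode_solution_on H Q \<alpha> \<beta> y" "\<alpha> \<le> \<beta>" "y \<alpha> < -v" "0 < v"
    and bounds: "\<And>t. t \<in> {\<alpha><..<\<beta>} \<Longrightarrow> \<bar>H t\<bar> \<le> C \<and> m \<le> Q t" and "C * v < m"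
  shows "\<forall>t\<in>{\<alpha>..\<beta>}. y t \<le> -v"
proof -
  have "\<forall>t\<in>{\<alpha>..\<beta>}. -v - y t \<ge> 0"
  proof (rule nonneg_if_derivative_pos_at_zeros)
    show "continuous_on {\<alpha>..\<beta>} (\<lambda>t. -v - y t)"
      using assms(1) unfolding ode_solution_on_def by (intro continuous_intros) auto
    fix t assume t: "\<alpha> < t" "t < \<beta>" "-v - y t = 0"
    then have "y t = -v" by linarith
    then have "Q t / y t = - (Q t / v)" by simp
    moreover have "m / v \<le> Q t / v" using bounds[of t] t \<open>0 < v\<close> by (intro divide_right_mono) auto
    moreover have "C < m / v" using \<open>C * v < m\<close> \<open>0 < v\<close> by (simp add: pos_less_divide_eq)
    ultimately have "H t + Q t / y t < 0" using bounds[of t] t by (simp add: abs_le_iff)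
    moreover have "(y has_real_derivative H t + Q t / y t) (at t)"
      using assms(1) t(1,2) unfolding ode_solution_on_def by auto
    ultimately show "\<exists>d>0. ((\<lambda>t. -v - y t) has_real_derivative d) (at t)"
      by (intro exI[of _ "- (H t + Q t / y t)"]) (auto intro!: derivative_eq_intros)
  qed (use assms(2,3) in auto)
  then show ?thesis by auto
qed

text \<open>Where \<open>Q \<ge> m\<close>, a negative solution is first pushed below the line \<open>-(t - \<alpha>)\<close> down to
  depth \<open>w\<close>, and then cannot climb back above \<open>-w/2\<close>.\<close>
lemma ode_solution_away_from_zero:
  assumes "ode_solution_on H Q \<alpha> \<beta> y" "y \<alpha> < 0" "\<alpha> + w \<le> \<beta>"
    and bounds: "\<And>t. t \<in> {\<alpha><..<\<beta>} \<Longrightarrow> \<bar>H t\<bar> \<le> C \<and> m \<le> Q t"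
    and "0 \<le> C" "0 < w" "2 * w * (C + 1) \<le> m"
  shows "\<forall>t\<in>{\<alpha> + w..\<beta>}. y t \<le> -w/2"
proof -
  have cont: "continuous_on {\<alpha>..\<beta>} y"
    and der: "\<And>t. t \<in> {\<alpha><..<\<beta>} \<Longrightarrow> (y has_real_derivative H t + Q t / y t) (at t)"
    using assms(1) unfolding ode_solution_on_def by auto
  have "\<forall>t\<in>{\<alpha>..\<alpha> + w}. -(t - \<alpha>) - y t \<ge> 0"
  proof (rule nonneg_if_derivative_pos_at_zeros)
    show "continuous_on {\<alpha>..\<alpha> + w} (\<lambda>t. -(t - \<alpha>) - y t)"
      using assms(3) by (intro continuous_intros continuous_on_subset[OF cont]) auto
    fix t assume t: "\<alpha> < t" "t < \<alpha> + w" "-(t - \<alpha>) - y t = 0"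
    have "y t = -(t - \<alpha>)" using t(3) by linarith
    have "0 < m" using assms(5-7) by (smt (verit) mult_pos_pos)
    have "2 * (C + 1) \<le> m / w" using assms(6,7) by (simp add: field_simps)
    also have "\<dots> \<le> Q t / (t - \<alpha>)"
      using bounds[of t] t assms(3) \<open>0 < m\<close> by (intro frac_le) auto
    moreover have "Q t / y t = - (Q t / (t - \<alpha>))"
      unfolding \<open>y t = -(t - \<alpha>)\<close> by (rule divide_minus_right)
    ultimately have "H t + Q t / y t \<le> -C - 2"
      using bounds[of t] t(1,2) assms(3) by (simp add: abs_le_iff)
    then show "\<exists>d>0. ((\<lambda>t. -(t - \<alpha>) - y t) has_real_derivative d) (at t)"
      using der[of t] t(1,2) assms(3,5)
      by (intro exI[of _ "-1 - (H t + Q t / y t)"]) (auto intro!: derivative_eq_intros)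
  qed (use assms(2,6) in auto)
  then have "y (\<alpha> + w) \<le> -w" using assms(6) by (auto dest: bspec[of _ _ "\<alpha> + w"])
  moreover have "ode_solution_on H Q (\<alpha> + w) \<beta> y"
    using ode_solution_on_subinterval[OF assms(1)] assms(6) by simp
  moreover have "\<bar>H t\<bar> \<le> C \<and> m \<le> Q t" if "t \<in> {\<alpha> + w<..<\<beta>}" for t
    using bounds[of t] that assms(6) by auto
  moreover have "C * (w/2) < m"
  proof -
    have "C * (w/2) < 2 * w * (C + 1)" using assms(5,6) by (simp add: algebra_simps add_pos_nonneg)
    with assms(7) show ?thesis by linarith
  qed
  ultimately show ?thesis
    using ode_solution_stays_below[of H Q "\<alpha> + w" \<beta> y "w/2" C m] assms(3,6) by fastforce
qed

section \<open>Shooting from the singular endpoint\<close>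

lemma eventually_divide_real_Suc_less:
  assumes "0 < r" shows "\<forall>\<^sub>F n in sequentially. c / (real n + 1) < r"
proof -
  have "(\<lambda>n. c * inverse (real (Suc n))) \<longlonglongrightarrow> c * 0"
    by (intro tendsto_mult tendsto_const LIMSEQ_inverse_real_of_nat)
  then have "(\<lambda>n. c / (real n + 1)) \<longlonglongrightarrow> 0" by (simp add: divide_inverse add.commute)
  with assms show ?thesis by (simp add: order_tendstoD)
qed

locale singular_shooting =
  fixes H Q Z :: "real \<Rightarrow> real"
  assumes H_cont: "continuous_on {0..1} H"
    and Q_cont: "continuous_on {0..1} Q"
    and Q_pos: "\<And>t. t \<in> {0<..<1} \<Longrightarrow> 0 < Q t"
    and Q_0: "Q 0 = 0"
    and Z_neg: "\<And>t. t \<in> {0<..<1} \<Longrightarrow> Z t < 0"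
    and Z_sub: "\<And>t. t \<in> {0<..<1} \<Longrightarrow> \<exists>d. (Z has_real_derivative d) (at t) \<and> d < H t + Q t / Z t"
begin

definition Hmax :: real where "Hmax = (SUP t\<in>{0..1}. \<bar>H t\<bar>)"

lemma abs_H_le_Hmax: "t \<in> {0..1} \<Longrightarrow> \<bar>H t\<bar> \<le> Hmax"
proof -
  have "compact ((\<lambda>t. \<bar>H t\<bar>) ` {0..1})"
    by (intro compact_continuous_image continuous_intros H_cont compact_Icc)
  then have "bdd_above ((\<lambda>t. \<bar>H t\<bar>) ` {0..1})" by (intro bounded_imp_bdd_above compact_imp_bounded)
  then show "t \<in> {0..1} \<Longrightarrow> \<bar>H t\<bar> \<le> Hmax" unfolding Hmax_def by (rule cSUP_upper2) auto
qed

lemma Hmax_nonneg: "0 \<le> Hmax"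
  using abs_H_le_Hmax[of 0] by simp

lemma Z_cont: "continuous_on {0<..<1} Z"
  using Z_sub by (meson DERIV_isCont continuous_at_imp_continuous_on)

definition lo :: "nat \<Rightarrow> real" where "lo n = 1 / (real n + 4)"
definition hi :: "nat \<Rightarrow> real" where "hi n = 1 - lo n"
definition eps :: "nat \<Rightarrow> real" where "eps n = min (1 / (real n + 1)) (- Z (lo n) / 2)"

lemma lo_pos: "0 < lo n" and lo_le: "lo n \<le> 1 / (real n + 1)" and lo_lt_hi: "lo n < hi n"
  unfolding lo_def hi_def by (auto simp: field_simps)

lemma in_unit_interval: "lo n \<le> t \<Longrightarrow> t \<le> hi n \<Longrightarrow> t \<in> {0<..<1}"
  using lo_pos[of n] unfolding hi_def by auto

lemma interval_subset: "{lo n..hi n} \<subseteq> {0<..<1}"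
  using in_unit_interval by auto

lemma interval_mono: "n \<le> m \<Longrightarrow> {lo n..hi n} \<subseteq> {lo m..hi m}"
  unfolding lo_def hi_def by (auto intro!: divide_left_mono)

lemma eventually_lo_le: "0 < r \<Longrightarrow> \<forall>\<^sub>F n in sequentially. lo n \<le> r"
  by (rule eventually_mono[OF eventually_divide_real_Suc_less[of r 1]])
    (use lo_le in \<open>auto intro: order.trans less_imp_le\<close>)

lemma eventually_interval_contains:
  assumes "0 < s" "t < 1" shows "\<forall>\<^sub>F n in sequentially. lo n < s \<and> t < hi n"
proof (rule eventually_mono[OF eventually_lo_le[of "min s (1 - t) / 2"]])
  show "lo n < s \<and> t < hi n" if "lo n \<le> min s (1 - t) / 2" for n
    using that assms lo_pos[of n] unfolding hi_def min_def by (auto split: if_splits)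
qed (use assms in simp)

lemma eps_pos: "0 < eps n" and eps_le: "eps n \<le> 1 / (real n + 1)" and Z_less_eps: "Z (lo n) < - eps n"
proof -
  have "lo n \<in> {0<..<1}" using lo_pos[of n] lo_lt_hi[of n] unfolding hi_def by auto
  then have "Z (lo n) < 0" by (rule Z_neg)
  then show "0 < eps n" "eps n \<le> 1 / (real n + 1)" "Z (lo n) < - eps n" unfolding eps_def by auto
qed

lemma approximate_solution_exists:
  "\<exists>y. y (lo n) = - eps n \<and> ode_solution_on H Q (lo n) (hi n) y \<and> (\<forall>t\<in>{lo n..hi n}. y t < 0)"
proof -
  have sub: "{lo n..hi n} \<subseteq> {0..1}" using interval_subset[of n] by auto
  obtain t0 where t0: "t0 \<in> {lo n..hi n}" "\<And>t. t \<in> {lo n..hi n} \<Longrightarrow> Q t0 \<le> Q t"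
    using continuous_attains_inf[OF compact_Icc _ continuous_on_subset[OF Q_cont sub]] lo_lt_hi[of n]
    by fastforce
  have "0 < Q t0" using Q_pos t0(1) interval_subset by blast
  define \<eta> where "\<eta> = min (eps n / 2) (Q t0 / (Hmax + 1))"
  have "0 < \<eta>" "- eps n < - \<eta>" using eps_pos[of n] \<open>0 < Q t0\<close> Hmax_nonneg unfolding \<eta>_def by auto
  have "\<eta> \<le> Q t0 / (Hmax + 1)" unfolding \<eta>_def by simp
  then have "\<eta> * (Hmax + 1) \<le> Q t0" using Hmax_nonneg by (simp add: pos_le_divide_eq)
  moreover have "\<bar>H t\<bar> \<le> Hmax \<and> Q t0 \<le> Q t" if "t \<in> {lo n..hi n}" for t
    using abs_H_le_Hmax t0(2) that sub by blast
  ultimately obtain y where "y (lo n) = - eps n" "ode_solution_on H Q (lo n) (hi n) y"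
    and "\<forall>t\<in>{lo n..hi n}. y t \<le> -\<eta>"
    using ode_solution_exists_below[of "lo n" "hi n" H Q Hmax "Q t0" \<eta> "- eps n"] lo_lt_hi[of n]
      continuous_on_subset[OF H_cont sub] continuous_on_subset[OF Q_cont sub] \<open>0 < \<eta>\<close> \<open>- eps n < - \<eta>\<close>
    by auto
  moreover have "\<forall>t\<in>{lo n..hi n}. y t < 0" using \<open>0 < \<eta>\<close> \<open>\<forall>t\<in>{lo n..hi n}. y t \<le> -\<eta>\<close> by force
  ultimately show ?thesis by blast
qed

text \<open>\<open>Y n\<close> is only meaningful on \<open>[lo n, hi n]\<close>; limits in \<open>n\<close> only look at large \<open>n\<close>.\<close>
definition Y :: "nat \<Rightarrow> real \<Rightarrow> real" where
  "Y n = (SOME y. y (lo n) = - eps n \<and> ode_solution_on H Q (lo n) (hi n) y \<and> (\<forall>t\<in>{lo n..hi n}. y t < 0))"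

lemma Y_start: "Y n (lo n) = - eps n"
  and Y_solution: "ode_solution_on H Q (lo n) (hi n) (Y n)"
  and Y_neg: "t \<in> {lo n..hi n} \<Longrightarrow> Y n t < 0"
  using someI_ex[OF approximate_solution_exists[of n]] unfolding Y_def by auto

lemma Y_ge_Z:
  assumes "t \<in> {lo n..hi n}" shows "Z t \<le> Y n t"
proof -
  have "\<forall>t\<in>{lo n..hi n}. Z t \<le> Y n t"
  proof (rule ode_solution_above_subsolution[OF Y_solution])
    show "lo n \<le> hi n" using lo_lt_hi[of n] by simp
    show "continuous_on {lo n..hi n} Z" by (rule continuous_on_subset[OF Z_cont interval_subset])
    show "Z (lo n) < Y n (lo n)" using Z_less_eps[of n] by (simp add: Y_start)
    show "\<exists>d. (Z has_real_derivative d) (at s) \<and> d < H s + Q s / Z s" if "s \<in> {lo n<..<hi n}" for s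
      using that in_unit_interval[of n s] by (intro Z_sub) auto
  qed
  with assms show ?thesis by blast
qed

lemma Y_nonexpansive:
  assumes "n \<le> m" "t \<in> {lo n..hi n}"
  shows "\<bar>Y m t - Y n t\<bar> \<le> \<bar>Y m (lo n) + eps n\<bar>"
proof -
  have sub: "{lo n..hi n} \<subseteq> {lo m..hi m}" using interval_mono[OF assms(1)] .
  have "ode_solution_on H Q (lo n) (hi n) (Y m)"
    using ode_solution_on_subinterval[OF Y_solution[of m]] sub lo_lt_hi[of n] by auto
  moreover have "Y m s < 0 \<and> Y n s < 0 \<and> 0 \<le> Q s" if "s \<in> {lo n<..<hi n}" for s
    using that sub in_unit_interval[of n s] Y_neg[of s m] Y_neg[of s n] Q_pos[of s] by auto
  ultimately show ?thesis
    using ode_solutions_nonexpansive[OF _ Y_solution[of n]] assms(2) by (simp add: Y_start)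
qed

lemma Y_above_line:
  assumes "0 < \<eta>"
  shows "\<exists>\<delta>>0. \<forall>n. \<forall>t\<in>{lo n..hi n}. t \<le> \<delta> \<longrightarrow> -(eps n + \<eta> + (Hmax + 2 * \<eta>) * t) \<le> Y n t"
proof -
  have "(Q \<longlongrightarrow> 0) (at 0 within {0..1})"
    using Q_cont Q_0 unfolding continuous_on_def by (metis atLeastAtMost_iff order_refl zero_le_one)
  moreover have "0 < \<eta>\<^sup>2" using assms by simp
  ultimately have "\<forall>\<^sub>F t in at 0 within {0..1}. Q t < \<eta>\<^sup>2" by (rule order_tendstoD)
  then obtain d where "d > 0" and d: "\<And>t. t \<in> {0..1} \<Longrightarrow> t \<noteq> 0 \<Longrightarrow> dist t 0 < d \<Longrightarrow> Q t < \<eta>\<^sup>2"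
    unfolding eventually_at by blast
  show ?thesis
  proof (intro exI[of _ "d/2"] conjI allI ballI impI)
    fix n t assume t: "t \<in> {lo n..hi n}" "t \<le> d/2"
    have "ode_solution_on H Q (lo n) t (Y n)"
      using ode_solution_on_subinterval[OF Y_solution[of n]] t by auto
    then have "\<forall>s\<in>{lo n..t}. -((eps n + \<eta>) + (Hmax + 2 * \<eta>) * (s - lo n)) \<le> Y n s"
    proof (rule ode_solution_above_line)
      show "\<bar>H s\<bar> \<le> Hmax \<and> 0 \<le> Q s \<and> Q s \<le> \<eta>\<^sup>2" if "s \<in> {lo n<..<t}" for s
        using that t in_unit_interval[of n s] abs_H_le_Hmax[of s] Q_pos[of s] d[of s] \<open>d > 0\<close>
        by (auto simp: dist_real_def less_imp_le)
    qed (use t assms eps_pos[of n] Hmax_nonneg in \<open>auto simp: Y_start\<close>)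
    moreover have "(Hmax + 2 * \<eta>) * (t - lo n) \<le> (Hmax + 2 * \<eta>) * t"
      using lo_pos[of n] Hmax_nonneg assms by (intro mult_left_mono) auto
    ultimately show "-(eps n + \<eta> + (Hmax + 2 * \<eta>) * t) \<le> Y n t"
      using t by force
  qed (use \<open>d > 0\<close> in simp)
qed

lemma Y_bounded_away_from_zero:
  assumes "0 < s" "s \<le> t" "t < 1"
  shows "\<exists>w>0. \<forall>\<^sub>F n in sequentially. \<forall>x\<in>{s..t}. Y n x \<le> -w"
proof -
  have sub: "{s/2..t} \<subseteq> {0<..<1}" using assms by auto
  obtain x0 where x0: "x0 \<in> {s/2..t}" "\<And>x. x \<in> {s/2..t} \<Longrightarrow> Q x0 \<le> Q x"
    using continuous_attains_inf[OF compact_Icc _ continuous_on_subset[OF Q_cont, of "{s/2..t}"]] sub assms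
    by fastforce
  define m where "m = Q x0"
  have "0 < m" unfolding m_def using Q_pos x0(1) sub by blast
  define w where "w = min (s/2) (m / (2 * (Hmax + 1)))"
  have "0 < w" using \<open>0 < m\<close> assms Hmax_nonneg unfolding w_def by auto
  have "w \<le> s/2" "w \<le> m / (2 * (Hmax + 1))" unfolding w_def by (rule min.cobounded1, rule min.cobounded2)
  then have "2 * w * (Hmax + 1) \<le> m" using Hmax_nonneg by (simp add: field_simps)
  have "\<forall>x\<in>{s..t}. Y n x \<le> -(w/2)" if n: "lo n < s/2" "t < hi n" for n
  proof -
    have "ode_solution_on H Q (s - w) t (Y n)"
      by (rule ode_solution_on_subinterval[OF Y_solution[of n]]) (use n \<open>w \<le> s/2\<close> in auto)
    then have "\<forall>x\<in>{s - w + w..t}. Y n x \<le> -w/2"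
    proof (rule ode_solution_away_from_zero)
      show "Y n (s - w) < 0" using n \<open>w \<le> s/2\<close> \<open>0 < w\<close> assms by (intro Y_neg) auto
      show "\<bar>H x\<bar> \<le> Hmax \<and> m \<le> Q x" if "x \<in> {s - w<..<t}" for x
        using that \<open>w \<le> s/2\<close> abs_H_le_Hmax[of x] x0(2)[of x] assms unfolding m_def by auto
    qed (use assms \<open>0 < w\<close> Hmax_nonneg \<open>2 * w * (Hmax + 1) \<le> m\<close> in auto)
    then show ?thesis by simp
  qed
  then have "\<forall>\<^sub>F n in sequentially. \<forall>x\<in>{s..t}. Y n x \<le> -(w/2)"
    using eventually_interval_contains[of "s/2" t] assms by (auto elim!: eventually_mono)
  with \<open>0 < w\<close> show ?thesis by (intro exI[of _ "w/2"]) auto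
qed

lemma Y_uniformly_Cauchy:
  assumes "0 < s" "t < 1"
  shows "uniformly_Cauchy_on {s..t} Y"
proof (rule uniformly_Cauchy_onI')
  fix e :: real assume "0 < e"
  obtain \<delta> where "\<delta> > 0" and \<delta>: "\<And>n x. x \<in> {lo n..hi n} \<Longrightarrow> x \<le> \<delta> \<Longrightarrow>
      -(eps n + e/4 + (Hmax + 2 * (e/4)) * x) \<le> Y n x"
    using Y_above_line[of "e/4"] \<open>0 < e\<close> by auto
  have "\<forall>\<^sub>F m in sequentially. (lo m < s \<and> t < hi m) \<and> lo m \<le> \<delta> \<and> (Hmax + e + 2) / (real m + 1) < e/2"
    using \<open>0 < e\<close> by (intro eventually_conj eventually_interval_contains[OF assms]
        eventually_lo_le[OF \<open>\<delta> > 0\<close>] eventually_divide_real_Suc_less) auto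
  then obtain M where M: "\<And>m. M \<le> m \<Longrightarrow>
      (lo m < s \<and> t < hi m) \<and> lo m \<le> \<delta> \<and> (Hmax + e + 2) / (real m + 1) < e/2"
    unfolding eventually_sequentially by blast
  show "\<exists>M. \<forall>x\<in>{s..t}. \<forall>m\<ge>M. \<forall>n>m. dist (Y m x) (Y n x) < e"
  proof (intro exI[of _ M] ballI allI impI)
    fix x m n assume x: "x \<in> {s..t}" and "M \<le> m" "m < n"
    note Mm = M[OF \<open>M \<le> m\<close>]
    define r where "r = 1 / (real m + 1)"
    have "0 < r" "r * (Hmax + e + 2) < e/2" using Mm unfolding r_def by auto
    have "eps m \<le> r" "lo m \<le> r" using eps_le[of m] lo_le[of m] unfolding r_def by auto
    have "1 / (real n + 1) \<le> r" unfolding r_def using \<open>m < n\<close> by (intro divide_left_mono) auto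
    then have "eps n \<le> r" using eps_le[of n] by linarith
    have lo_m: "lo m \<in> {lo n..hi n}" using interval_mono[of m n] \<open>m < n\<close> lo_lt_hi[of m] by auto
    \<comment> \<open>At \<open>lo m\<close> both \<open>Y m = -eps m\<close> and \<open>Y n\<close> are squeezed near \<open>0\<close>; \<open>Y_nonexpansive\<close>
      carries this closeness on to \<open>x\<close>.\<close>
    have "(Hmax + e/2) * lo m \<le> (Hmax + e/2) * r"
      using \<open>lo m \<le> r\<close> Hmax_nonneg \<open>0 < e\<close> by (intro mult_left_mono) auto
    moreover have "(Hmax + e/2) * r + r \<le> r * (Hmax + e + 2)"
      using mult_pos_pos[OF \<open>0 < e\<close> \<open>0 < r\<close>] \<open>0 < r\<close> by (simp add: algebra_simps)
    moreover have "r \<le> r * (Hmax + e + 2)" using \<open>0 < r\<close> Hmax_nonneg \<open>0 < e\<close> by simp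
    moreover have "Y n (lo m) < 0" using Y_neg[OF lo_m] .
    moreover have "-(eps n + e/4 + (Hmax + e/2) * lo m) \<le> Y n (lo m)"
      using \<delta>[OF lo_m] Mm by simp
    ultimately have "\<bar>Y n (lo m) + eps m\<bar> < e"
      using \<open>eps m \<le> r\<close> \<open>eps n \<le> r\<close> \<open>r * (Hmax + e + 2) < e/2\<close> eps_pos[of m]
      unfolding abs_less_iff by linarith
    moreover have "\<bar>Y n x - Y m x\<bar> \<le> \<bar>Y n (lo m) + eps m\<bar>"
      using Y_nonexpansive[of m n x] x Mm \<open>m < n\<close> by auto
    ultimately have "\<bar>Y n x - Y m x\<bar> < e" by linarith
    then show "dist (Y m x) (Y n x) < e" by (simp add: dist_real_def abs_minus_commute)
  qed
qed

definition Ylim :: "real \<Rightarrow> real" where "Ylim t = lim (\<lambda>n. Y n t)"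

lemma Y_uniform_limit: "0 < s \<Longrightarrow> t < 1 \<Longrightarrow> uniform_limit {s..t} Y Ylim sequentially"
  using Cauchy_uniformly_convergent[OF Y_uniformly_Cauchy]
  unfolding uniformly_convergent_uniform_limit_iff Ylim_def[abs_def] .

lemma Y_tendsto_Ylim: "t \<in> {0<..<1} \<Longrightarrow> (\<lambda>n. Y n t) \<longlonglongrightarrow> Ylim t"
  using tendsto_uniform_limitI[OF Y_uniform_limit[of t t]] by auto

lemma eventually_in_interval: "t \<in> {0<..<1} \<Longrightarrow> \<forall>\<^sub>F n in sequentially. t \<in> {lo n..hi n}"
  using eventually_interval_contains[of t t] by (auto elim!: eventually_mono)

lemma Ylim_ge_Z:
  assumes "t \<in> {0<..<1}" shows "Z t \<le> Ylim t"
proof (rule tendsto_lowerbound[OF Y_tendsto_Ylim[OF assms]])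
  show "\<forall>\<^sub>F n in sequentially. Z t \<le> Y n t"
    using eventually_in_interval[OF assms] by eventually_elim (rule Y_ge_Z)
qed simp

lemma Ylim_le_if_eventually:
  assumes "\<forall>\<^sub>F n in sequentially. Y n t \<le> c" "t \<in> {0<..<1}" shows "Ylim t \<le> c"
  using tendsto_upperbound[OF Y_tendsto_Ylim[OF assms(2)] assms(1)] by simp

lemma Ylim_bounded_away_from_zero:
  assumes "0 < s" "s \<le> t" "t < 1"
  shows "\<exists>w>0. \<forall>x\<in>{s..t}. Ylim x \<le> -w"
proof -
  obtain w where "w > 0" and w: "\<forall>\<^sub>F n in sequentially. \<forall>x\<in>{s..t}. Y n x \<le> -w"
    using Y_bounded_away_from_zero[OF assms] by blast
  have "Ylim x \<le> -w" if "x \<in> {s..t}" for x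
    using that assms by (intro Ylim_le_if_eventually eventually_mono[OF w]) auto
  with \<open>w > 0\<close> show ?thesis by blast
qed

lemma Ylim_neg: "t \<in> {0<..<1} \<Longrightarrow> Ylim t < 0"
  using Ylim_bounded_away_from_zero[of t t] by force

lemma Ylim_above_line:
  assumes "0 < \<eta>"
  shows "\<exists>\<delta>>0. \<forall>t\<in>{0<..<1}. t \<le> \<delta> \<longrightarrow> -(2 * \<eta> + (Hmax + 2 * \<eta>) * t) \<le> Ylim t"
proof -
  obtain \<delta> where "\<delta> > 0" and \<delta>: "\<And>n t. t \<in> {lo n..hi n} \<Longrightarrow> t \<le> \<delta> \<Longrightarrow>
      -(eps n + \<eta> + (Hmax + 2 * \<eta>) * t) \<le> Y n t"
    using Y_above_line[OF assms] by blast
  have "-(2 * \<eta> + (Hmax + 2 * \<eta>) * t) \<le> Ylim t" if t: "t \<in> {0<..<1}" "t \<le> \<delta>" for t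
  proof (rule tendsto_lowerbound[OF Y_tendsto_Ylim[OF t(1)]])
    have "\<forall>\<^sub>F n in sequentially. t \<in> {lo n..hi n} \<and> 1 / (real n + 1) < \<eta>"
      using eventually_in_interval[OF t(1)] eventually_divide_real_Suc_less[OF assms] by (rule eventually_conj)
    then show "\<forall>\<^sub>F n in sequentially. -(2 * \<eta> + (Hmax + 2 * \<eta>) * t) \<le> Y n t"
    proof eventually_elim
      case (elim n)
      then show ?case using \<delta>[of t n] t(2) eps_le[of n] by auto
    qed
  qed simp
  with \<open>\<delta> > 0\<close> show ?thesis by blast
qed

lemma Ylim_tendsto_0: "(Ylim \<longlongrightarrow> 0) (at_right 0)"
proof (rule tendstoI)
  fix e :: real assume "0 < e"
  then obtain \<delta> where "\<delta> > 0" and \<delta>: "\<And>t. t \<in> {0<..<1} \<Longrightarrow> t \<le> \<delta> \<Longrightarrow>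
      -(2 * (e/4) + (Hmax + 2 * (e/4)) * t) \<le> Ylim t"
    using Ylim_above_line[of "e/4"] by auto
  have "((\<lambda>t. -(2 * (e/4) + (Hmax + 2 * (e/4)) * t)) \<longlongrightarrow> -(2 * (e/4) + (Hmax + 2 * (e/4)) * 0))
      (at_right 0)"
    by (intro tendsto_intros)
  then have "\<forall>\<^sub>F t in at_right 0. -e < -(2 * (e/4) + (Hmax + 2 * (e/4)) * t)"
    using \<open>0 < e\<close> by (intro order_tendstoD(1)) auto
  moreover have "\<forall>\<^sub>F t in at_right 0. t \<in> {0<..<1} \<and> t \<le> \<delta>"
    using \<open>\<delta> > 0\<close> unfolding eventually_at_right_field by (intro exI[of _ "min \<delta> 1"]) auto
  ultimately show "\<forall>\<^sub>F t in at_right 0. dist (Ylim t) 0 < e"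
  proof eventually_elim
    case (elim t)
    then show ?case using \<delta>[of t] Ylim_neg[of t] by (auto simp: dist_real_def)
  qed
qed

lemma Ylim_derivative:
  assumes t: "t \<in> {0<..<1}"
  shows "(Ylim has_real_derivative H t + Q t / Ylim t) (at t)"
proof -
  define s u where "s = t/2" and "u = (1 + t)/2"
  have su: "0 < s" "s < t" "t < u" "u < 1" using t unfolding s_def u_def by auto
  obtain w where "w > 0" and w: "\<forall>\<^sub>F n in sequentially. \<forall>x\<in>{s..u}. Y n x \<le> -w"
    using Y_bounded_away_from_zero[of s u] su by auto
  have Ylim_le: "Ylim x \<le> -w" if "x \<in> {s..u}" for x
    using that su by (intro Ylim_le_if_eventually eventually_mono[OF w]) auto
  obtain Qm where Qm: "\<And>x. x \<in> {s..u} \<Longrightarrow> Q x \<le> Qm"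
    using compact_attains_sup[OF compact_continuous_image[OF continuous_on_subset[OF Q_cont] compact_Icc],
        of s u] su by force
  have Q_nonneg: "0 \<le> Q x" if "x \<in> {s..u}" for x using Q_pos[of x] that su by auto
  then have "0 \<le> Qm" using Qm[of s] su by force
  have "uniform_limit {s..u} (\<lambda>n x. H x + Q x / Y n x) (\<lambda>x. H x + Q x / Ylim x) sequentially"
    using Q_nonneg Qm su
    by (intro uniform_limit_ode_rhs[OF Y_uniform_limit w Ylim_le \<open>w > 0\<close> _ \<open>0 \<le> Qm\<close>]) auto
  moreover have "\<forall>\<^sub>F n in sequentially. lo n < s \<and> u < hi n"
    using su by (intro eventually_interval_contains) auto
  then have "\<forall>\<^sub>F n in sequentially. \<forall>x\<in>{s..u}.
      (Y n has_real_derivative H x + Q x / Y n x) (at x within {s..u})"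
  proof eventually_elim
    case (elim n)
    then show ?case
      using Y_solution[of n] unfolding ode_solution_on_def by (auto intro: has_field_derivative_at_within)
  qed
  ultimately have "(Ylim has_real_derivative H t + Q t / Ylim t) (at t within {s..u})"
    using su by (intro has_real_derivative_of_uniform_limit) (auto intro!: Y_tendsto_Ylim)
  then show ?thesis using su at_within_Icc_at[of s t u] by simp
qed

theorem singular_shooting_solution:
  "\<exists>y. (\<forall>t\<in>{0<..<1}. (y has_real_derivative H t + Q t / y t) (at t) \<and> Z t \<le> y t \<and> y t < 0)
     \<and> (y \<longlongrightarrow> 0) (at_right 0)"
  using Ylim_derivative Ylim_ge_Z Ylim_neg Ylim_tendsto_0 by blast

end

section \<open>Back to problem \<open>(P\<^sub>c)\<close>\<close>

lemma has_real_derivative_reflect: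
  assumes "(f has_real_derivative D) (at (1 - t))"
  shows "((\<lambda>t. f (1 - t)) has_real_derivative - D) (at t)"
proof -
  have "((\<lambda>t. 1 - t) has_real_derivative -1) (at t)" by (auto intro!: derivative_eq_intros)
  from DERIV_chain2[where g="\<lambda>t. 1 - t" and x=t, OF assms this] show ?thesis by simp
qed

lemma tendsto_reflect_at_left_1:
  assumes "(f \<longlongrightarrow> l) (at_right 0)"
  shows "((\<lambda>\<phi>. f (1 - \<phi>)) \<longlongrightarrow> l) (at_left (1::real))"
proof -
  have "filterlim (\<lambda>\<phi>. 1 - \<phi>) (at_right 0) (at_left (1::real))"
    by (intro tendsto_imp_filterlim_at_right tendsto_eq_intros)
      (auto simp: eventually_at_left_field intro: exI[of _ 0])
  then show ?thesis by (rule filterlim_compose[OF assms])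
qed

lemma singular_shooting_reflection:
  assumes h_cont: "continuous_on {0..1} h" and q_cont: "continuous_on {0..1} q"
    and q_pos: "\<forall>\<phi>\<in>{0<..<1}. q \<phi> > 0" and q_1: "q 1 = 0"
    and z: "sol_P h q c z" and "c < c'"
  shows "singular_shooting (\<lambda>t. c' - h (1 - t)) (\<lambda>t. q (1 - t)) (\<lambda>t. z (1 - t))"
proof
  show "continuous_on {0..1} (\<lambda>t. c' - h (1 - t))"
    by (intro continuous_intros continuous_on_compose2[OF h_cont]) auto
  show "continuous_on {0..1} (\<lambda>t. q (1 - t))"
    by (intro continuous_intros continuous_on_compose2[OF q_cont]) auto
  fix t :: real assume t: "t \<in> {0<..<1}"
  then have "1 - t \<in> {0<..<1}" by auto
  with z have z_der: "(z has_real_derivative h (1 - t) - c - q (1 - t) / z (1 - t)) (at (1 - t))"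
    and "z (1 - t) < 0"
    unfolding sol_P_def by auto
  then show "z (1 - t) < 0" by simp
  show "\<exists>d. ((\<lambda>t. z (1 - t)) has_real_derivative d) (at t) \<and> d < c' - h (1 - t) + q (1 - t) / z (1 - t)"
    using has_real_derivative_reflect[OF z_der] \<open>c < c'\<close> by (intro exI conjI) auto
  show "0 < q (1 - t)" using q_pos \<open>1 - t \<in> {0<..<1}\<close> by blast
qed (use q_1 in simp)

lemma sol_P00_exists_above:
  assumes "continuous_on {0..1} h" "continuous_on {0..1} q"
    and "\<forall>\<phi>\<in>{0<..<1}. q \<phi> > 0" "q 1 = 0"
    and z: "sol_P h q c z" and "c < c'"
  shows "\<exists>u. sol_P00 h q c' u"
proof -
  obtain y where
      y: "\<And>t. t \<in> {0<..<1} \<Longrightarrow> (y has_real_derivative c' - h (1 - t) + q (1 - t) / y t) (at t)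
         \<and> z (1 - t) \<le> y t \<and> y t < 0"
    and y_0: "(y \<longlongrightarrow> 0) (at_right 0)"
    using singular_shooting.singular_shooting_solution[OF singular_shooting_reflection[OF assms]] by blast
  define u where "u \<phi> = (if \<phi> \<in> {0<..<1} then y (1 - \<phi>) else 0)" for \<phi>
  have u_neg: "u \<phi> < 0" if "\<phi> \<in> {0<..<1}" for \<phi> using y[of "1 - \<phi>"] that unfolding u_def by auto
  have u_der: "(u has_real_derivative h \<phi> - c' - q \<phi> / u \<phi>) (at \<phi>)" if "\<phi> \<in> {0<..<1}" for \<phi>
  proof (rule has_field_derivative_transform_within_open[where S="{0<..<1}"])
    show "((\<lambda>\<phi>. y (1 - \<phi>)) has_real_derivative h \<phi> - c' - q \<phi> / u \<phi>) (at \<phi>)"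
      using has_real_derivative_reflect[OF conjunct1[OF y[of "1 - \<phi>"]]] that unfolding u_def by auto
  qed (use that in \<open>auto simp: u_def\<close>)
  have "(z \<longlongrightarrow> 0) (at_right 0)"
    using continuous_on_Icc_at_rightD[of 0 1 z] z unfolding sol_P_def by simp
  moreover have "z \<phi> \<le> u \<phi> \<and> u \<phi> \<le> 0" if "\<phi> \<in> {0<..<1}" for \<phi>
    using y[of "1 - \<phi>"] that by (auto simp: u_def)
  then have "\<forall>\<^sub>F \<phi> in at_right 0. z \<phi> \<le> u \<phi>" "\<forall>\<^sub>F \<phi> in at_right 0. u \<phi> \<le> 0"
    unfolding eventually_at_right_field by (intro exI[of _ 1]; simp)+
  ultimately have u_0: "(u \<longlongrightarrow> 0) (at_right 0)"
    using tendsto_sandwich[OF _ _ _ tendsto_const] by blast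
  have "((\<lambda>\<phi>. y (1 - \<phi>)) \<longlongrightarrow> 0) (at_left 1)" by (rule tendsto_reflect_at_left_1[OF y_0])
  moreover have "\<forall>\<^sub>F \<phi> in at_left 1. y (1 - \<phi>) = u \<phi>"
    unfolding eventually_at_left_field by (intro exI[of _ 0]) (auto simp: u_def)
  ultimately have u_1: "(u \<longlongrightarrow> 0) (at_left 1)" by (rule Lim_transform_eventually)
  have u_cont: "continuous_on {0..1} u"
  proof (rule continuous_on_IccI)
    show "(u \<longlongrightarrow> u 0) (at_right 0)" "(u \<longlongrightarrow> u 1) (at_left 1)"
      using u_0 u_1 by (simp_all add: u_def)
    show "u \<midarrow>\<phi>\<rightarrow> u \<phi>" if "0 < \<phi>" "\<phi> < 1" for \<phi>
      using DERIV_isCont[OF u_der] that unfolding isCont_def by auto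
  qed simp
  have "continuous_on {0<..<1} h" "continuous_on {0<..<1} q" "continuous_on {0<..<1} u"
    by (auto intro: continuous_on_subset[OF assms(1)] continuous_on_subset[OF assms(2)]
        continuous_on_subset[OF u_cont])
  then have "continuous_on {0<..<1} (\<lambda>\<phi>. h \<phi> - c' - q \<phi> / u \<phi>)"
    using u_neg by (intro continuous_intros) (auto dest: u_neg)
  with u_der have "C1_on {0<..<1} u" unfolding C1_on_def by blast
  with u_cont u_der u_neg show ?thesis
    unfolding sol_P00_def sol_P_def by (intro exI[of _ u]) (auto simp: u_def)
qed

theorem proposition6p3:
  fixes f h q :: "real \<Rightarrow> real" and cstar :: real
  assumes f_deriv: "\<forall>x\<in>{0..1}. (f has_real_derivative h x) (at x within {0..1})"
    and h_cont: "continuous_on {0..1} h"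
    and f0: "f 0 = 0"
    and q: "cond_q q"
    and cstar: "\<forall>c. (\<exists>z. sol_P00 h q c z) \<longleftrightarrow> c \<ge> cstar"
  shows "\<forall>c < cstar. \<not> (\<exists>z. sol_P h q c z)"
proof (intro allI impI notI)
  fix c assume "c < cstar" and "\<exists>z. sol_P h q c z"
  then obtain z where z: "sol_P h q c z" by blast
  have "continuous_on {0..1} q" "\<forall>\<phi>\<in>{0<..<1}. q \<phi> > 0" "q 1 = 0"
    using q unfolding cond_q_def by auto
  with h_cont z \<open>c < cstar\<close> have "\<exists>u. sol_P00 h q ((c + cstar) / 2) u"
    by (intro sol_P00_exists_above) auto
  with cstar have "cstar \<le> (c + cstar) / 2" by blast
  with \<open>c < cstar\<close> show False by simp
qed

end
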